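(* Let $G$, $\mathrm{b}$, $(w_{ij})$, $M^*$ and $(y^*,\lambda^* )$ be as in the context, and assume the LP relaxation (Primal LP) has no fractional solution. Then for any alternating path $P$ (with respect to $M^*$) in $G$ of length at least $2n$, there exists an edge $\{i,j\}\in P$ such that $|w_{ij}-y_i^*-y_j^*|>0$.
   Context: Let $G=(V,E)$ be a finite undirected simple graph, $V=\{1,\dots,n\}$, with real edge weights $w_{ij}$ and positive integers $b_i\le\deg_G(i)$; $N(i)$ is the neighbour set of $i$. A perfect $\mathrm{b}$-matching is a set of edges in which each vertex $i$ has degree exactly $b_i$; assume one exists. Primal LP: minimize $\sum_{\{i,j\}\in E}w_{ij}x_{ij}$ s.t. $\sum_{j\in N(i)}x_{ij}=b_i$ for all $i$, $0\le x_{ij}\le1$. Dual LP: maximize $\sum_ib_iy_i-\sum_{\{i,j\}\in E}\lambda_{ij}$ s.t. $w_{ij}+\lambda_{ij}\ge y_i+y_j$, $\lambda_{ij}\ge0$. "No fractional solution" means every optimal primal solution lies in $\{0,1\}^E$; then the minimum weight perfect $\mathrm{b}$-matching $M^*$ is unique. $(y^*,\lambda^* )$ is an optimal solution of the Dual LP. A walk $P=(i_1,i_2,\dots,i_k)$ in $G$ (consecutive vertices adjacent, length $k-1$) is an alternating path if (a) either all odd edges $\{i_1,i_2\},\{i_3,i_4\},\dots$ belong to $M^*$ and all even edges $\{i_2,i_3\},\{i_4,i_5\},\dots$ do not, or all odd edges do not belong to $M^*$ and all even edges do; and (b) $P$ may revisit vertices and edges but never repeats an edge immediately: $i_r\neq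 i_{r+1}$ and $i_r\neq i_{r+2}$ for $1\le r\le k-2$. *)

theory Defs
  imports Complex_Main
begin

definition simple_graph :: "nat \<Rightarrow> nat set set \<Rightarrow> bool" where
  "simple_graph n E \<longleftrightarrow> (\<forall>e\<in>E. \<exists>i j. e = {i, j} \<and> i \<noteq> j \<and> i \<in> {1..n} \<and> j \<in> {1..n})"

definition deg :: "nat set set \<Rightarrow> nat \<Rightarrow> nat" where
  "deg E i = card {e \<in> E. i \<in> e}"

definition perfect_b_matching :: "nat \<Rightarrow> nat set set \<Rightarrow> (nat \<Rightarrow> nat) \<Rightarrow> nat set set \<Rightarrow> bool" where
  "perfect_b_matching n E b M \<longleftrightarrow> M \<subseteq> E \<and> (\<forall>i\<in>{1..n}. card {e \<in> M. i \<in> e} = b i)"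

definition min_weight_perfect_b_matching ::
  "nat \<Rightarrow> nat set set \<Rightarrow> (nat set \<Rightarrow> real) \<Rightarrow> (nat \<Rightarrow> nat) \<Rightarrow> nat set set \<Rightarrow> bool" where
  "min_weight_perfect_b_matching n E w b M \<longleftrightarrow> perfect_b_matching n E b M \<and>
     (\<forall>M'. perfect_b_matching n E b M' \<longrightarrow> (\<Sum>e\<in>M. w e) \<le> (\<Sum>e\<in>M'. w e))"

definition primal_feasible :: "nat \<Rightarrow> nat set set \<Rightarrow> (nat \<Rightarrow> nat) \<Rightarrow> (nat set \<Rightarrow> real) \<Rightarrow> bool" where
  "primal_feasible n E b x \<longleftrightarrow> (\<forall>e\<in>E. 0 \<le> x e \<and> x e \<le> 1) \<and>
     (\<forall>i\<in>{1..n}. (\<Sum>e\<in>{e \<in> E. i \<in> e}. x e) = real (b i))"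

definition primal_optimal ::
  "nat \<Rightarrow> nat set set \<Rightarrow> (nat set \<Rightarrow> real) \<Rightarrow> (nat \<Rightarrow> nat) \<Rightarrow> (nat set \<Rightarrow> real) \<Rightarrow> bool" where
  "primal_optimal n E w b x \<longleftrightarrow> primal_feasible n E b x \<and>
     (\<forall>x'. primal_feasible n E b x' \<longrightarrow> (\<Sum>e\<in>E. w e * x e) \<le> (\<Sum>e\<in>E. w e * x' e))"

definition no_fractional_solution ::
  "nat \<Rightarrow> nat set set \<Rightarrow> (nat set \<Rightarrow> real) \<Rightarrow> (nat \<Rightarrow> nat) \<Rightarrow> bool" where
  "no_fractional_solution n E w b \<longleftrightarrow>
     (\<forall>x. primal_optimal n E w b x \<longrightarrow> (\<forall>e\<in>E. x e = 0 \<or> x e = 1))"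

definition dual_feasible ::
  "nat set set \<Rightarrow> (nat set \<Rightarrow> real) \<Rightarrow> (nat \<Rightarrow> real) \<Rightarrow> (nat set \<Rightarrow> real) \<Rightarrow> bool" where
  "dual_feasible E w y lam \<longleftrightarrow>
     (\<forall>i j. {i, j} \<in> E \<longrightarrow> w {i, j} + lam {i, j} \<ge> y i + y j) \<and> (\<forall>e\<in>E. lam e \<ge> 0)"

definition dual_obj ::
  "nat \<Rightarrow> nat set set \<Rightarrow> (nat \<Rightarrow> nat) \<Rightarrow> (nat \<Rightarrow> real) \<Rightarrow> (nat set \<Rightarrow> real) \<Rightarrow> real" where
  "dual_obj n E b y lam = (\<Sum>i\<in>{1..n}. real (b i) * y i) - (\<Sum>e\<in>E. lam e)"

definition dual_optimal ::
  "nat \<Rightarrow> nat set set \<Rightarrow> (nat set \<Rightarrow> real) \<Rightarrow> (nat \<Rightarrow> nat) \<Rightarrow> (nat \<Rightarrow> real) \<Rightarrow> (nat set \<Rightarrow> real) \<Rightarrow> bool" where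
  "dual_optimal n E w b y lam \<longleftrightarrow> dual_feasible E w y lam \<and>
     (\<forall>y' lam'. dual_feasible E w y' lam' \<longrightarrow> dual_obj n E b y' lam' \<le> dual_obj n E b y lam)"

text \<open>Alternating path: walk given as a vertex list P = [i_1,...,i_k] (length k-1 = length P - 1).
  List indices are 0-based, so edge r (0-based) is {P!r, P!(r+1)}; 1-based odd edges are r even.\<close>
definition alternating_path :: "nat set set \<Rightarrow> nat set set \<Rightarrow> nat list \<Rightarrow> bool" where
  "alternating_path E M P \<longleftrightarrow>
     (\<forall>r. r + 1 < length P \<longrightarrow> {P ! r, P ! (r + 1)} \<in> E) \<and>
     ((\<forall>r. r + 1 < length P \<longrightarrow> ({P ! r, P ! (r + 1)} \<in> M \<longleftrightarrow> even r)) \<or>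
      (\<forall>r. r + 1 < length P \<longrightarrow> ({P ! r, P ! (r + 1)} \<in> M \<longleftrightarrow> odd r))) \<and>
     (\<forall>r. r + 1 < length P \<longrightarrow> P ! r \<noteq> P ! (r + 1)) \<and>
     (\<forall>r. r + 2 < length P \<longrightarrow> P ! r \<noteq> P ! (r + 2))"

end

theory Submission
  imports Defs "HOL-Analysis.Analysis"
begin

text \<open>Suppose every edge of P is tight, w_ij = y_i + y_j. Among the 2n+1 vertices of P at even
  positions some vertex repeats, which closes an alternating walk of even length. Pushing a small
  amount of flow around it -- out of the edges of M*, into the others, once per traversal -- keeps
  every degree constraint, and keeps the cost because on tight edges the weights telescope along
  the walk like a potential difference. The indicator of M* is LP-optimal (the LP has an optimum by
  compactness, it is integral, hence a perfect b-matching, hence no cheaper than M*), so the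
  perturbed point is a fractional optimal solution.\<close>

lemma sum_mult_indicator_subset:
  fixes w :: "'a \<Rightarrow> 'b::semiring_1"
  assumes "finite E" and "M \<subseteq> E"
  shows "(\<Sum>e\<in>E. w e * indicator M e) = (\<Sum>e\<in>M. w e)"
  by (rule sum.mono_neutral_cong_right) (use assms in auto)

lemma sum_mult_card_fibre:
  fixes g :: "'a \<Rightarrow> 'b::comm_semiring_1"
  assumes "finite A" and "finite T" and "f ` T \<subseteq> A"
  shows "(\<Sum>a\<in>A. g a * of_nat (card {t \<in> T. f t = a})) = (\<Sum>t\<in>T. g (f t))"
proof -
  have "(\<Sum>a\<in>A. g a * of_nat (card {t \<in> T. f t = a})) = (\<Sum>a\<in>A. \<Sum>t\<in>{t \<in> T. f t = a}. g (f t))"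
    by (intro sum.cong) (auto simp: mult.commute)
  also have "\<dots> = (\<Sum>t\<in>T. g (f t))"
    using assms by (intro sum.group) auto
  finally show ?thesis .
qed

lemma sum_alternating_telescope:
  fixes f :: "nat \<Rightarrow> 'a::comm_ring_1"
  assumes "r \<le> s"
  shows "(\<Sum>t=r..<s. (-1) ^ t * (f t + f (Suc t))) = (-1) ^ r * f r - (-1) ^ s * f s"
  using assms by (induction s rule: dec_induct) (auto simp: algebra_simps)

lemma continuous_on_linear_form:
  "continuous_on UNIV (\<lambda>x :: 'a \<Rightarrow> real. \<Sum>e\<in>A. c e * x e)"
  by (intro continuous_intros continuous_on_product_coordinates)

lemma primal_optimal_exists:
  assumes "finite E" and "primal_feasible n E b x\<^sub>0"
  shows "\<exists>x. primal_optimal n E w b x"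
proof -
  define B where "B e = (if e \<in> E then {0..1} else {0 :: real})" for e
  define S where "S = (\<Pi> e\<in>UNIV. B e) \<inter>
    (\<Inter>i\<in>{1..n}. {x. (\<Sum>e\<in>{e \<in> E. i \<in> e}. x e) = real (b i)})"
  have "compactin (product_topology (\<lambda>_. euclidean) UNIV) (\<Pi>\<^sub>E e\<in>UNIV. B e)"
    unfolding compactin_PiE by (auto simp: B_def)
  hence "compact (\<Pi> e\<in>UNIV. B e)"
    by (simp add: euclidean_product_topology PiE_UNIV_domain)
  moreover have "closed (\<Inter>i\<in>{1..n}. {x. (\<Sum>e\<in>{e \<in> E. i \<in> e}. x e) = real (b i)})"
    by (intro closed_INT ballI closed_Collect_eq continuous_on_const
        continuous_on_linear_form[where c = "\<lambda>_. 1", simplified])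
  ultimately have "compact S"
    unfolding S_def by blast
  define cut where "cut x e = (if e \<in> E then x e else 0)" for x :: "nat set \<Rightarrow> real" and e
  have cut_in_S: "cut x \<in> S" if "primal_feasible n E b x" for x
  proof -
    have "(\<Sum>e\<in>{e \<in> E. i \<in> e}. cut x e) = (\<Sum>e\<in>{e \<in> E. i \<in> e}. x e)" for i
      by (intro sum.cong) (auto simp: cut_def)
    thus ?thesis
      using that unfolding S_def B_def cut_def primal_feasible_def by auto
  qed
  have cost_cut: "(\<Sum>e\<in>E. w e * cut x e) = (\<Sum>e\<in>E. w e * x e)" for x
    by (intro sum.cong) (auto simp: cut_def)
  obtain x where "x \<in> S"
    and x_min: "\<And>x'. x' \<in> S \<Longrightarrow> (\<Sum>e\<in>E. w e * x e) \<le> (\<Sum>e\<in>E. w e * x' e)"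
    using continuous_attains_inf[OF \<open>compact S\<close> _ continuous_on_subset[OF continuous_on_linear_form]]
      cut_in_S[OF assms(2)]
    by blast
  have "primal_feasible n E b x"
  proof -
    have "x e \<in> {0..1}" if "e \<in> E" for e
    proof -
      have "x e \<in> B e"
        using \<open>x \<in> S\<close> unfolding S_def by blast
      thus ?thesis
        using that by (simp add: B_def)
    qed
    thus ?thesis
      using \<open>x \<in> S\<close> unfolding S_def primal_feasible_def by auto
  qed
  moreover have "(\<Sum>e\<in>E. w e * x e) \<le> (\<Sum>e\<in>E. w e * x' e)" if "primal_feasible n E b x'" for x'
    using x_min[OF cut_in_S[OF that]] cost_cut by simp
  ultimately show ?thesis
    unfolding primal_optimal_def by blast
qed

lemma primal_feasible_indicator:
  assumes "finite E" and "perfect_b_matching n E b M"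
  shows "primal_feasible n E b (indicator M)"
proof -
  have "{e \<in> E. i \<in> e} \<inter> M = {e \<in> M. i \<in> e}" for i
    using assms(2) unfolding perfect_b_matching_def by blast
  thus ?thesis
    using assms unfolding primal_feasible_def perfect_b_matching_def
    by (simp add: sum_indicator_eq_card indicator_def)
qed

lemma perfect_b_matching_of_integral:
  assumes "finite E" and "primal_feasible n E b x" and "\<forall>e\<in>E. x e = 0 \<or> x e = 1"
  defines "M \<equiv> {e \<in> E. x e = 1}"
  shows "perfect_b_matching n E b M" and "\<forall>e\<in>E. x e = indicator M e"
proof -
  show x_eq: "\<forall>e\<in>E. x e = indicator M e"
    using assms(3) by (auto simp: M_def indicator_def)
  have "card {e \<in> M. i \<in> e} = b i" if "i \<in> {1..n}" for i
  proof -
    have "real (b i) = (\<Sum>e\<in>{e \<in> E. i \<in> e}. x e)"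
      using assms(2) that unfolding primal_feasible_def by simp
    also have "\<dots> = (\<Sum>e\<in>{e \<in> E. i \<in> e}. indicator M e)"
      using x_eq by (intro sum.cong) auto
    also have "\<dots> = real (card ({e \<in> E. i \<in> e} \<inter> M))"
      using assms(1) by (simp add: indicator_def)
    also have "{e \<in> E. i \<in> e} \<inter> M = {e \<in> M. i \<in> e}"
      unfolding M_def by blast
    finally show ?thesis by simp
  qed
  moreover have "M \<subseteq> E"
    unfolding M_def by blast
  ultimately show "perfect_b_matching n E b M"
    unfolding perfect_b_matching_def by blast
qed

lemma primal_optimal_indicator_of_min_weight:
  assumes "finite E" and "no_fractional_solution n E w b"
    and "min_weight_perfect_b_matching n E w b M"
  shows "primal_optimal n E w b (indicator M)"
proof -
  have "M \<subseteq> E" and M_feasible: "primal_feasible n E b (indicator M)"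
    using assms(1,3) primal_feasible_indicator
    unfolding min_weight_perfect_b_matching_def perfect_b_matching_def by auto
  obtain x where x: "primal_optimal n E w b x"
    using primal_optimal_exists[OF assms(1) M_feasible] by blast
  define M' where "M' = {e \<in> E. x e = 1}"
  have "primal_feasible n E b x" and "\<forall>e\<in>E. x e = 0 \<or> x e = 1"
    using x assms(2) unfolding primal_optimal_def no_fractional_solution_def by auto
  from perfect_b_matching_of_integral[OF assms(1) this]
  have "perfect_b_matching n E b M'" and x_eq: "\<forall>e\<in>E. x e = indicator M' e"
    unfolding M'_def by blast+
  have "M' \<subseteq> E"
    unfolding M'_def by blast
  have "(\<Sum>e\<in>E. w e * indicator M e) = (\<Sum>e\<in>M. w e)"
    using assms(1) \<open>M \<subseteq> E\<close> by (rule sum_mult_indicator_subset)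
  also have "\<dots> \<le> (\<Sum>e\<in>M'. w e)"
    using assms(3) \<open>perfect_b_matching n E b M'\<close> unfolding min_weight_perfect_b_matching_def by blast
  also have "\<dots> = (\<Sum>e\<in>E. w e * indicator M' e)"
    using assms(1) \<open>M' \<subseteq> E\<close> by (rule sum_mult_indicator_subset[symmetric])
  also have "\<dots> = (\<Sum>e\<in>E. w e * x e)"
    using x_eq by (intro sum.cong) auto
  finally show ?thesis
    using x M_feasible unfolding primal_optimal_def by (meson order_trans)
qed

lemma primal_optimal_add_balanced:
  assumes "primal_optimal n E w b x"
    and "\<forall>i\<in>{1..n}. (\<Sum>e\<in>{e \<in> E. i \<in> e}. d e) = 0"
    and "(\<Sum>e\<in>E. w e * d e) = 0"
    and "\<forall>e\<in>E. 0 \<le> x e + d e \<and> x e + d e \<le> 1"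
  shows "primal_optimal n E w b (\<lambda>e. x e + d e)"
  using assms unfolding primal_optimal_def primal_feasible_def
  by (simp add: sum.distrib distrib_left)

lemma finite_edges_if_simple_graph:
  assumes "simple_graph n E"
  shows "finite E"
proof (rule finite_subset)
  show "E \<subseteq> Pow {1..n}"
    using assms unfolding simple_graph_def by fastforce
qed simp

lemma walk_revisits_at_even_positions:
  assumes "set P \<subseteq> {1..n}" and "2 * n + 1 \<le> length P"
  obtains r s where "r < s" "s < length P" "even r" "even s" "P ! r = P ! s"
proof -
  have "card ((\<lambda>k. P ! (2 * k)) ` {0..n}) \<le> card {1..n}"
    using assms by (intro card_mono) auto
  hence "\<not> inj_on (\<lambda>k. P ! (2 * k)) {0..n}"
    using card_image by fastforce
  then obtain k l where "k \<le> n" "l \<le> n" "k < l" "P ! (2 * k) = P ! (2 * l)"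
    unfolding inj_on_def by (metis atLeastAtMost_iff linorder_neqE_nat)
  thus ?thesis
    using that[of "2 * k" "2 * l"] assms(2) by auto
qed

definition walk_edge :: "nat list \<Rightarrow> nat \<Rightarrow> nat set" where
  "walk_edge P t = {P ! t, P ! Suc t}"

definition alternating_circulation ::
  "nat set set \<Rightarrow> nat list \<Rightarrow> nat \<Rightarrow> nat \<Rightarrow> nat set \<Rightarrow> real" where
  "alternating_circulation M P r s e =
     (if e \<in> M then -1 else 1) * real (card {t \<in> {r..<s}. walk_edge P t = e})"

lemma alternating_path_sign:
  assumes "alternating_path E M P"
  obtains c :: real
  where "\<And>t. Suc t < length P \<Longrightarrow> (if walk_edge P t \<in> M then -1 else 1) = c * (-1) ^ t"
proof -
  consider "\<forall>t. Suc t < length P \<longrightarrow> (walk_edge P t \<in> M \<longleftrightarrow> even t)"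
    | "\<forall>t. Suc t < length P \<longrightarrow> (walk_edge P t \<in> M \<longleftrightarrow> odd t)"
    using assms unfolding alternating_path_def walk_edge_def by auto
  thus ?thesis
    by cases (use that[of "-1"] that[of 1] in auto)
qed

text \<open>The circulation has sign c (-1)^t on the t-th walk edge, so against a potential
  difference along the walk its sum telescopes.\<close>

lemma sum_alternating_circulation_eq_0:
  assumes "finite E" and "alternating_path E M P"
    and "r \<le> s" and "s < length P" and "even r" and "even s" and "P ! r = P ! s"
    and potential: "\<And>t. t \<in> {r..<s} \<Longrightarrow> \<phi> (walk_edge P t) = g (P ! t) + g (P ! Suc t)"
  shows "(\<Sum>e\<in>E. \<phi> e * alternating_circulation M P r s e) = 0"
proof -
  obtain c :: real
    where sign: "\<And>t. Suc t < length P \<Longrightarrow> (if walk_edge P t \<in> M then -1 else 1) = c * (-1) ^ t"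
    using alternating_path_sign[OF assms(2)] by blast
  define sg where "sg e = (if e \<in> M then -1 else 1 :: real)" for e
  have "walk_edge P ` {r..<s} \<subseteq> E"
    using assms(2,4) unfolding alternating_path_def walk_edge_def by auto
  hence "(\<Sum>e\<in>E. \<phi> e * alternating_circulation M P r s e)
      = (\<Sum>t\<in>{r..<s}. \<phi> (walk_edge P t) * sg (walk_edge P t))"
    using assms(1) sum_mult_card_fibre[of E "{r..<s}" "walk_edge P" "\<lambda>e. \<phi> e * sg e"]
    unfolding alternating_circulation_def sg_def by (simp add: mult.assoc)
  also have "\<dots> = c * (\<Sum>t=r..<s. (-1) ^ t * (g (P ! t) + g (P ! Suc t)))"
    unfolding sum_distrib_left
    using assms(4) by (intro sum.cong) (auto simp: potential sign[folded sg_def])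
  also have "\<dots> = 0"
    using sum_alternating_telescope[OF assms(3), of "\<lambda>t. g (P ! t)"] assms(5-7) by simp
  finally show ?thesis .
qed

lemma sum_incident_alternating_circulation_eq_0:
  assumes "finite E" and "alternating_path E M P"
    and "r \<le> s" and "s < length P" and "even r" and "even s" and "P ! r = P ! s"
  shows "(\<Sum>e\<in>{e \<in> E. i \<in> e}. alternating_circulation M P r s e) = 0"
proof -
  have "of_bool (i \<in> walk_edge P t) = of_bool (P ! t = i) + (of_bool (P ! Suc t = i) :: real)"
    if "t \<in> {r..<s}" for t
  proof -
    have "P ! t \<noteq> P ! Suc t"
      using assms(2,4) that unfolding alternating_path_def by simp
    thus ?thesis
      unfolding walk_edge_def by auto
  qed
  hence "(\<Sum>e\<in>E. of_bool (i \<in> e) * alternating_circulation M P r s e) = 0"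
    by (rule sum_alternating_circulation_eq_0[OF assms])
  thus ?thesis
    using assms(1) by (simp add: Collect_conj_eq)
qed

lemma indicator_add_alternating_circulation_bounds:
  fixes \<epsilon> :: real and M :: "nat set set" and P :: "nat list"
  assumes "0 < \<epsilon>" and "\<epsilon> * real (s - r) < 1"
  defines "x \<equiv> \<lambda>e. indicator M e + \<epsilon> * alternating_circulation M P r s e"
  shows "0 \<le> x e \<and> x e \<le> 1"
    and "e \<in> walk_edge P ` {r..<s} \<Longrightarrow> 0 < x e \<and> x e < 1"
proof -
  define m where "m = card {t \<in> {r..<s}. walk_edge P t = e}"
  have "m \<le> card {r..<s}"
    unfolding m_def by (intro card_mono) auto
  hence "\<epsilon> * m \<le> \<epsilon> * real (s - r)"
    using assms(1) by (intro mult_left_mono) auto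
  hence "\<epsilon> * m < 1"
    using assms(2) by linarith
  moreover have "0 \<le> \<epsilon> * m"
    using assms(1) by simp
  moreover have x_eq: "x e = (if e \<in> M then 1 - \<epsilon> * m else \<epsilon> * m)"
    unfolding x_def alternating_circulation_def m_def by simp
  ultimately show "0 \<le> x e \<and> x e \<le> 1"
    by simp
  assume "e \<in> walk_edge P ` {r..<s}"
  hence "0 < m"
    unfolding m_def card_gt_0_iff by auto
  thus "0 < x e \<and> x e < 1"
    using assms(1) \<open>\<epsilon> * m < 1\<close> x_eq by simp
qed

lemma fractional_optimum_of_tight_alternating_closed_walk:
  assumes "finite E" and "primal_optimal n E w b (indicator M)" and "alternating_path E M P"
    and "r < s" and "s < length P" and "even r" and "even s" and "P ! r = P ! s"
    and tight: "\<And>t. t \<in> {r..<s} \<Longrightarrow> w (walk_edge P t) = y (P ! t) + y (P ! Suc t)"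
  shows "\<not> no_fractional_solution n E w b"
proof
  assume integral: "no_fractional_solution n E w b"
  define \<epsilon> where "\<epsilon> = 1 / (2 * real (s - r))"
  define x where "x e = indicator M e + \<epsilon> * alternating_circulation M P r s e" for e
  have closed_walk: "r \<le> s" "s < length P" "even r" "even s" "P ! r = P ! s"
    using assms(4-8) by auto
  have "0 < \<epsilon>" "\<epsilon> * real (s - r) < 1"
    using assms(4) unfolding \<epsilon>_def by auto
  note x_bounds = indicator_add_alternating_circulation_bounds[OF this, where M = M and P = P]
  have "(\<Sum>e\<in>E. w e * alternating_circulation M P r s e) = 0"
    by (rule sum_alternating_circulation_eq_0[OF assms(1,3) closed_walk, where g = y, OF tight])
  hence "primal_optimal n E w b x"
    unfolding x_def using x_bounds(1)
    by (intro primal_optimal_add_balanced[OF assms(2)])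
      (simp_all add: sum_incident_alternating_circulation_eq_0[OF assms(1,3) closed_walk]
        sum_distrib_left[symmetric] mult.left_commute)
  moreover have "walk_edge P r \<in> E"
    using assms(3-5) unfolding alternating_path_def walk_edge_def by auto
  ultimately have "x (walk_edge P r) \<in> {0, 1}"
    using integral unfolding no_fractional_solution_def by blast
  moreover have "0 < x (walk_edge P r) \<and> x (walk_edge P r) < 1"
    unfolding x_def using assms(4) by (intro x_bounds(2)) auto
  ultimately show False
    by auto
qed

theorem lemma2:
  fixes n :: nat and E :: "nat set set" and w :: "nat set \<Rightarrow> real" and b :: "nat \<Rightarrow> nat"
    and M :: "nat set set" and y :: "nat \<Rightarrow> real" and lam :: "nat set \<Rightarrow> real" and P :: "nat list"
  assumes "simple_graph n E"
    and "\<forall>i\<in>{1..n}. 0 < b i \<and> b i \<le> deg E i"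
    and "\<exists>M'. perfect_b_matching n E b M'"
    and "no_fractional_solution n E w b"
    and "min_weight_perfect_b_matching n E w b M"
    and "dual_optimal n E w b y lam"
    and "alternating_path E M P"
    and "set P \<subseteq> {1..n}"
    and "length P \<ge> 2 * n + 1"
  shows "\<exists>r. r + 1 < length P \<and> \<bar>w {P ! r, P ! (r + 1)} - y (P ! r) - y (P ! (r + 1))\<bar> > 0"
proof (rule ccontr)
  assume "\<not> ?thesis"
  hence tight: "w (walk_edge P t) = y (P ! t) + y (P ! Suc t)" if "Suc t < length P" for t
    using that unfolding walk_edge_def by force
  have "finite E"
    using assms(1) by (rule finite_edges_if_simple_graph)
  obtain r s where "r < s" "s < length P" "even r" "even s" "P ! r = P ! s"
    using walk_revisits_at_even_positions[OF assms(8,9)] .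
  moreover have "primal_optimal n E w b (indicator M)"
    using \<open>finite E\<close> assms(4,5) by (rule primal_optimal_indicator_of_min_weight)
  ultimately have "\<not> no_fractional_solution n E w b"
    using fractional_optimum_of_tight_alternating_closed_walk[OF \<open>finite E\<close> _ assms(7)] tight
    by auto
  thus False
    using assms(4) by contradiction
qed

end
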